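(* For every integer $d\ge2$, the infinite $d$-regular tree rooted at a vertex $o$ is Hamiltonian: it admits an invariant line ensemble $L$ with $\mathbb P(o\in L)=1$.
   Context: A line ensemble of $G=(V,E)$ is a symmetric $L:V^2\to\{0,1\}$ with $L(u,u)=0$, $L(u,v)=0$ unless $\{u,v\}\in E$, and $\sum_uL(u,v)\in\{0,2\}$ for all $v$; $v\in L$ means $\sum_uL(u,v)=2$. For a unimodular random rooted graph $(G,o)$, an invariant line ensemble is a random line ensemble $L$, defined on an enlarged probability space, such that the weighted rooted graph $(G,L,o)$ is unimodular, i.e. $\mathbb E\sum_vf(G,L,o,v)=\mathbb E\sum_vf(G,L,v,o)$ for all nonnegative measurable $f$ of isomorphism classes of doubly rooted weighted graphs. *)

theory Defs
  imports "HOL-Probability.Probability"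
begin

text \<open>The infinite d-regular tree, realised as the Cayley graph of the free product
of d copies of Z/2: vertices are reduced words over the alphabet {0..<d}
(no two consecutive letters equal), and w is adjacent to w@[a] for every admissible a.\<close>

definition tree_verts :: "nat \<Rightarrow> nat list set" where
  "tree_verts d = {w. (\<forall>x\<in>set w. x < d) \<and> (\<forall>i. Suc i < length w \<longrightarrow> w ! i \<noteq> w ! Suc i)}"

definition tree_adj :: "nat \<Rightarrow> nat list \<Rightarrow> nat list \<Rightarrow> bool" where
  "tree_adj d u v \<longleftrightarrow> u \<in> tree_verts d \<and> v \<in> tree_verts d \<and>
     ((\<exists>a. v = u @ [a]) \<or> (\<exists>a. u = v @ [a]))"

definition tree_aut :: "nat \<Rightarrow> (nat list \<Rightarrow> nat list) set" where
  "tree_aut d = {\<phi>. bij_betw \<phi> (tree_verts d) (tree_verts d) \<and>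
      (\<forall>u\<in>tree_verts d. \<forall>v\<in>tree_verts d. tree_adj d (\<phi> u) (\<phi> v) \<longleftrightarrow> tree_adj d u v)}"

text \<open>Line ensembles: L(u,v) = True encodes L(u,v) = 1.\<close>
definition line_ensemble :: "nat \<Rightarrow> (nat list \<times> nat list \<Rightarrow> bool) \<Rightarrow> bool" where
  "line_ensemble d L \<longleftrightarrow>
     (\<forall>u v. L (u, v) = L (v, u)) \<and> (\<forall>u. \<not> L (u, u)) \<and>
     (\<forall>u v. L (u, v) \<longrightarrow> tree_adj d u v) \<and>
     (\<forall>v. card {u. L (u, v)} \<in> {0, 2})"

definition in_line_ensemble :: "nat list \<Rightarrow> (nat list \<times> nat list \<Rightarrow> bool) \<Rightarrow> bool" where
  "in_line_ensemble v L \<longleftrightarrow> card {u. L (u, v)} = 2"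

definition LE_space :: "(nat list \<times> nat list \<Rightarrow> bool) measure" where
  "LE_space = PiM UNIV (\<lambda>_. count_space UNIV)"

text \<open>f is a function of the isomorphism class of the doubly rooted weighted graph
(T_d, L, u, v): it is invariant under relabelling by tree automorphisms
(and hence only sees L on pairs of tree vertices).\<close>
definition iso_invariant :: "nat \<Rightarrow> ((nat list \<times> nat list \<Rightarrow> bool) \<Rightarrow> nat list \<Rightarrow> nat list \<Rightarrow> ennreal) \<Rightarrow> bool" where
  "iso_invariant d f \<longleftrightarrow>
     (\<forall>\<phi>\<in>tree_aut d. \<forall>L L' u v. u \<in> tree_verts d \<longrightarrow> v \<in> tree_verts d \<longrightarrow>
        (\<forall>a\<in>tree_verts d. \<forall>b\<in>tree_verts d. L' (\<phi> a, \<phi> b) = L (a, b)) \<longrightarrow>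
        f L' (\<phi> u) (\<phi> v) = f L u v)"

text \<open>The law M of a random line ensemble L makes (T_d, L, o) unimodular
(mass transport principle for all nonnegative measurable isomorphism-invariant f).\<close>
definition unimodular_LE :: "nat \<Rightarrow> nat list \<Rightarrow> (nat list \<times> nat list \<Rightarrow> bool) measure \<Rightarrow> bool" where
  "unimodular_LE d r M \<longleftrightarrow>
     (\<forall>f. iso_invariant d f \<longrightarrow> (\<forall>u v. (\<lambda>L. f L u v) \<in> borel_measurable LE_space) \<longrightarrow>
        (\<integral>\<^sup>+ L. (\<integral>\<^sup>+ v. f L r v \<partial>count_space (tree_verts d)) \<partial>M) = (\<integral>\<^sup>+ L. (\<integral>\<^sup>+ v. f L v r \<partial>count_space (tree_verts d)) \<partial>M))"

end

theory Submission imports Defs begin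

text \<open>Label the edge between \<open>w\<close> and \<open>w @ [a]\<close> by the letter \<open>a\<close>. The edges labelled
0 or 1 form, through every vertex, a bi-infinite path alternating between the two labels, so
they are a line ensemble containing every vertex. This line ensemble is deterministic and is
preserved by the left multiplications of the free product of \<open>d\<close> copies of \<open>Z/2\<close>, which act
transitively on the vertices. Hence in the mass transport principle the root may be moved to
\<open>[]\<close>, and the two sums are then exchanged by the bijection \<open>v \<mapsto> v\<^sup>-\<^sup>1 = rev v\<close>, since
left multiplication by \<open>v\<^sup>-\<^sup>1\<close> sends the pair \<open>([], v)\<close> to \<open>(v\<^sup>-\<^sup>1, [])\<close>.\<close>

lemma tree_verts_iff: "w \<in> tree_verts d \<longleftrightarrow> (\<forall>x\<in>set w. x < d) \<and> distinct_adj w"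
  by (simp add: tree_verts_def distinct_adj_conv_nth)

lemma Nil_in_tree_verts: "[] \<in> tree_verts d"
  by (simp add: tree_verts_iff)

lemma Cons_in_tree_verts:
  "a # w \<in> tree_verts d \<longleftrightarrow> a < d \<and> w \<in> tree_verts d \<and> (w = [] \<or> hd w \<noteq> a)"
  by (cases w) (auto simp: tree_verts_iff)

lemma rev_in_tree_verts: "rev w \<in> tree_verts d \<longleftrightarrow> w \<in> tree_verts d"
  by (auto simp: tree_verts_iff)

lemma snoc_in_tree_verts:
  "u @ [a] \<in> tree_verts d \<longleftrightarrow> a < d \<and> u \<in> tree_verts d \<and> (u = [] \<or> last u \<noteq> a)"
  using rev_in_tree_verts[of "u @ [a]" d]
  by (simp add: Cons_in_tree_verts rev_in_tree_verts hd_rev)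

lemma tl_in_tree_verts: "w \<in> tree_verts d \<Longrightarrow> tl w \<in> tree_verts d"
  by (cases w) (auto simp: Cons_in_tree_verts)

definition gen_mult :: "nat \<Rightarrow> nat list \<Rightarrow> nat list" where
  "gen_mult a w = (if w \<noteq> [] \<and> hd w = a then tl w else a # w)"

definition word_mult :: "nat list \<Rightarrow> nat list \<Rightarrow> nat list" where
  "word_mult g = foldr gen_mult g"

lemma gen_mult_in_tree_verts: "a < d \<Longrightarrow> w \<in> tree_verts d \<Longrightarrow> gen_mult a w \<in> tree_verts d"
  by (auto simp: gen_mult_def tl_in_tree_verts Cons_in_tree_verts)

lemma gen_mult_gen_mult: "w \<in> tree_verts d \<Longrightarrow> gen_mult a (gen_mult a w) = w"
  by (cases w) (auto simp: gen_mult_def Cons_in_tree_verts)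

lemma bij_betw_gen_mult: "a < d \<Longrightarrow> bij_betw (gen_mult a) (tree_verts d) (tree_verts d)"
  by (rule bij_betw_byWitness[where f'="gen_mult a"])
     (auto simp: gen_mult_gen_mult gen_mult_in_tree_verts)

lemma gen_mult_snoc_label:
  assumes "\<exists>a\<in>A. v = u @ [a] \<or> u = v @ [a]"
  shows "\<exists>a\<in>A. gen_mult b v = gen_mult b u @ [a] \<or> gen_mult b u = gen_mult b v @ [a]"
proof -
  have snoc: "\<exists>a\<in>A. gen_mult b v = gen_mult b u @ [a] \<or> gen_mult b u = gen_mult b v @ [a]"
    if "c \<in> A" "v = u @ [c]" for u v c
    using that by (cases u; cases "c = b") (auto simp: gen_mult_def)
  from assms obtain c where "c \<in> A" "v = u @ [c] \<or> u = v @ [c]" by blast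
  then show ?thesis using snoc[of c v u] snoc[of c u v] by blast
qed

lemma word_mult_Cons: "word_mult (a # g) = gen_mult a \<circ> word_mult g"
  by (simp add: word_mult_def fun_eq_iff)

lemma word_mult_rev_self: "word_mult (rev w) w = []"
  by (induction w) (simp_all add: word_mult_def gen_mult_def)

lemma word_mult_Nil: "w \<in> tree_verts d \<Longrightarrow> word_mult w [] = w"
  by (induction w) (auto simp: word_mult_def gen_mult_def Cons_in_tree_verts)

definition ensemble_aut ::
    "nat \<Rightarrow> (nat list \<times> nat list \<Rightarrow> bool) \<Rightarrow> (nat list \<Rightarrow> nat list) \<Rightarrow> bool" where
  "ensemble_aut d L \<phi> \<longleftrightarrow> \<phi> \<in> tree_aut d \<and>
     (\<forall>a\<in>tree_verts d. \<forall>b\<in>tree_verts d. L (\<phi> a, \<phi> b) = L (a, b))"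

lemma ensemble_aut_id: "ensemble_aut d L id"
  by (auto simp: ensemble_aut_def tree_aut_def)

lemma ensemble_aut_comp:
  assumes f: "ensemble_aut d L f" and g: "ensemble_aut d L g"
  shows "ensemble_aut d L (f \<circ> g)"
proof -
  have bf: "bij_betw f (tree_verts d) (tree_verts d)"
    and bg: "bij_betw g (tree_verts d) (tree_verts d)"
    using f g by (auto simp: ensemble_aut_def tree_aut_def)
  then have "\<And>x. x \<in> tree_verts d \<Longrightarrow> g x \<in> tree_verts d" by (auto simp: bij_betw_def)
  then show ?thesis
    using f g bij_betw_trans[OF bg bf] unfolding ensemble_aut_def tree_aut_def by auto
qed

lemma ensemble_aut_word_mult:
  assumes "\<And>b. b < d \<Longrightarrow> ensemble_aut d L (gen_mult b)" and "\<forall>x\<in>set g. x < d"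
  shows "ensemble_aut d L (word_mult g)"
  using assms(2)
proof (induction g)
  case Nil then show ?case using ensemble_aut_id by (simp add: word_mult_def id_def)
next
  case (Cons a g)
  then have "ensemble_aut d L (gen_mult a \<circ> word_mult g)" by (simp add: ensemble_aut_comp assms(1))
  then show ?case by (simp only: word_mult_Cons)
qed

definition label_edges :: "nat \<Rightarrow> nat set \<Rightarrow> nat list \<times> nat list \<Rightarrow> bool" where
  "label_edges d A = (\<lambda>(u, v). tree_adj d u v \<and> (\<exists>a\<in>A. v = u @ [a] \<or> u = v @ [a]))"

lemma ensemble_aut_gen_mult_label_edges:
  assumes b: "b < d"
  shows "ensemble_aut d (label_edges d A) (gen_mult b)"
proof -
  have adj: "tree_adj d (gen_mult b u) (gen_mult b v)" if "tree_adj d u v" for u v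
    using that gen_mult_snoc_label[of UNIV v u b] gen_mult_in_tree_verts[OF b]
    unfolding tree_adj_def by blast
  have lab: "label_edges d A (gen_mult b u, gen_mult b v)" if "label_edges d A (u, v)" for u v
    using that adj gen_mult_snoc_label[of A v u b] unfolding label_edges_def by auto
  have "tree_adj d (gen_mult b u) (gen_mult b v) = tree_adj d u v"
    and "label_edges d A (gen_mult b u, gen_mult b v) = label_edges d A (u, v)"
    if "u \<in> tree_verts d" "v \<in> tree_verts d" for u v
    using adj[of "gen_mult b u" "gen_mult b v"] lab[of "gen_mult b u" "gen_mult b v"]
      adj lab gen_mult_gen_mult that by metis+
  then show ?thesis using bij_betw_gen_mult[OF b] by (auto simp: ensemble_aut_def tree_aut_def)
qed

definition neighbour :: "nat list \<Rightarrow> nat \<Rightarrow> nat list" where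
  "neighbour v a = (if v \<noteq> [] \<and> last v = a then butlast v else v @ [a])"

lemma labelled_neighbour_iff:
  assumes v: "v \<in> tree_verts d" and a: "a < d"
  shows "u \<in> tree_verts d \<and> (v = u @ [a] \<or> u = v @ [a]) \<longleftrightarrow> u = neighbour v a"
proof
  assume u: "u \<in> tree_verts d \<and> (v = u @ [a] \<or> u = v @ [a])"
  show "u = neighbour v a"
  proof (cases "v = u @ [a]")
    case False
    then have "u = v @ [a]" using u by auto
    moreover have "v = [] \<or> last v \<noteq> a" using u calculation snoc_in_tree_verts by auto
    ultimately show ?thesis by (auto simp: neighbour_def)
  qed (simp add: neighbour_def)
next
  assume u: "u = neighbour v a"
  show "u \<in> tree_verts d \<and> (v = u @ [a] \<or> u = v @ [a])"
  proof (cases "v \<noteq> [] \<and> last v = a")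
    case True
    then have "v = butlast v @ [a]" by (metis append_butlast_last_id)
    then show ?thesis
      using True u v snoc_in_tree_verts[of "butlast v" a d] by (auto simp: neighbour_def)
  next
    case False
    then show ?thesis using u v a snoc_in_tree_verts[of v a d] by (auto simp: neighbour_def)
  qed
qed

lemma neighbour_0_neq_1: "neighbour v 0 \<noteq> neighbour v 1"
  by (cases "v = []") (auto simp: neighbour_def dest: arg_cong[of _ _ length])

lemma label_edges_01_neighbours:
  assumes v: "v \<in> tree_verts d" and d: "d \<ge> 2"
  shows "{u. label_edges d {0, 1} (u, v)} = {neighbour v 0, neighbour v 1}"
  using v d labelled_neighbour_iff[OF v, of 0] labelled_neighbour_iff[OF v, of 1]
  unfolding label_edges_def tree_adj_def by auto

lemma line_ensemble_label_edges_01: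
  assumes "d \<ge> 2" shows "line_ensemble d (label_edges d {0, 1})"
proof -
  have "card {u. label_edges d {0, 1} (u, v)} \<in> {0, 2}" for v
  proof (cases "v \<in> tree_verts d")
    case True
    then show ?thesis using label_edges_01_neighbours[OF True assms] neighbour_0_neq_1[of v] by simp
  next
    case False
    then have "{u. label_edges d {0, 1} (u, v)} = {}" by (auto simp: label_edges_def tree_adj_def)
    then show ?thesis by simp
  qed
  moreover have "label_edges d {0, 1} (u, v) = label_edges d {0, 1} (v, u)"
    and "\<not> label_edges d {0, 1} (u, u)"
    and "label_edges d {0, 1} (u, v) \<Longrightarrow> tree_adj d u v" for u v
    by (auto simp: label_edges_def tree_adj_def)
  ultimately show ?thesis unfolding line_ensemble_def by blast
qed

lemma in_line_ensemble_label_edges_01: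
  assumes "d \<ge> 2" "r \<in> tree_verts d" shows "in_line_ensemble r (label_edges d {0, 1})"
  using label_edges_01_neighbours[OF assms(2,1)] neighbour_0_neq_1[of r]
  by (simp add: in_line_ensemble_def)

lemma mass_transport_left_invariant:
  assumes inv: "\<And>b. b < d \<Longrightarrow> ensemble_aut d L (gen_mult b)"
    and f: "iso_invariant d f" and r: "r \<in> tree_verts d"
  shows "(\<integral>\<^sup>+ v. f L r v \<partial>count_space (tree_verts d)) = (\<integral>\<^sup>+ v. f L v r \<partial>count_space (tree_verts d))"
proof -
  let ?V = "tree_verts d"
  have aut: "ensemble_aut d L (word_mult g)" if "g \<in> ?V" for g
    using that by (intro ensemble_aut_word_mult inv) (auto simp: tree_verts_def)
  have f_aut: "f L (word_mult g u) (word_mult g v) = f L u v" if "g \<in> ?V" "u \<in> ?V" "v \<in> ?V" for g u v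
    using f aut[OF that(1)] that(2,3) unfolding iso_invariant_def ensemble_aut_def by blast
  have bij: "bij_betw (word_mult g) ?V ?V" if "g \<in> ?V" for g
    using aut[OF that] by (simp add: ensemble_aut_def tree_aut_def)
  define \<psi> where "\<psi> = word_mult (rev r)"
  have r': "rev r \<in> ?V" using r by (simp add: rev_in_tree_verts)
  have \<psi>r: "\<psi> r = []" by (simp add: \<psi>_def word_mult_rev_self)
  have inversion: "f L [] u = f L (rev u) []" if u: "u \<in> ?V" for u
    using f_aut[of "rev u" "[]" u] u
    by (simp add: rev_in_tree_verts Nil_in_tree_verts word_mult_Nil word_mult_rev_self)
  have "(\<integral>\<^sup>+ v. f L r v \<partial>count_space ?V) = (\<integral>\<^sup>+ v. f L [] (\<psi> v) \<partial>count_space ?V)"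
    using f_aut[OF r' r] \<psi>r by (intro nn_integral_cong) (auto simp: \<psi>_def)
  also have "\<dots> = (\<integral>\<^sup>+ u. f L [] u \<partial>count_space ?V)"
    unfolding \<psi>_def by (rule nn_integral_bij_count_space[OF bij[OF r']])
  also have "\<dots> = (\<integral>\<^sup>+ u. f L (rev u) [] \<partial>count_space ?V)"
    using inversion by (intro nn_integral_cong) simp
  also have "\<dots> = (\<integral>\<^sup>+ u. f L u [] \<partial>count_space ?V)"
    by (rule nn_integral_bij_count_space)
       (rule bij_betw_byWitness[where f'=rev]; auto simp: rev_in_tree_verts)
  also have "\<dots> = (\<integral>\<^sup>+ u. f L (\<psi> u) [] \<partial>count_space ?V)"
    unfolding \<psi>_def by (rule nn_integral_bij_count_space[OF bij[OF r'], symmetric])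
  also have "\<dots> = (\<integral>\<^sup>+ u. f L u r \<partial>count_space ?V)"
    using f_aut[OF r' _ r] \<psi>r by (intro nn_integral_cong) (auto simp: \<psi>_def)
  finally show ?thesis .
qed

lemma space_LE_space: "space LE_space = UNIV"
  by (simp add: LE_space_def space_PiM)

lemma pred_LE_space_eq: "Measurable.pred LE_space (\<lambda>L. L = L')"
proof -
  have "(\<lambda>L. L = L') = (\<lambda>L. \<forall>i. L i = L' i)" by (auto simp: fun_eq_iff)
  moreover have "Measurable.pred LE_space (\<lambda>L. \<forall>i. L i = L' i)"
    unfolding LE_space_def by measurable
  ultimately show ?thesis by simp
qed

lemma pred_LE_space_in_line_ensemble: "Measurable.pred LE_space (in_line_ensemble r)"
proof -
  have "in_line_ensemble r = (\<lambda>L. \<exists>a b. a \<noteq> b \<and> (\<forall>u. L (u, r) = (u = a \<or> u = b)))"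
    by (auto simp: fun_eq_iff card_2_iff in_line_ensemble_def)
  moreover have "Measurable.pred LE_space (\<lambda>L. \<exists>a b. a \<noteq> b \<and> (\<forall>u. L (u, r) = (u = a \<or> u = b)))"
    unfolding LE_space_def by measurable
  ultimately show ?thesis by simp
qed

lemma AE_return_LE_space: "AE L in return LE_space L'. L = L'"
  by (subst AE_return) (auto simp: space_LE_space intro: pred_LE_space_eq)

text \<open>No measurability of \<open>g\<close> is needed, since singletons are measurable.\<close>

lemma nn_integral_return_LE_space: "(\<integral>\<^sup>+ L. g L \<partial>return LE_space L') = g L'"
proof -
  have "(\<integral>\<^sup>+ L. g L \<partial>return LE_space L') = (\<integral>\<^sup>+ L. g L' \<partial>return LE_space L')"
    using AE_return_LE_space[of L'] by (intro nn_integral_cong_AE) (auto elim: AE_mp)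
  also have "\<dots> = g L'"
    using prob_space.emeasure_space_1[OF prob_space_return[of L' LE_space]]
    by (simp add: space_LE_space)
  finally show ?thesis .
qed

lemma unimodular_LE_return:
  assumes "\<And>b. b < d \<Longrightarrow> ensemble_aut d L (gen_mult b)" and "r \<in> tree_verts d"
  shows "unimodular_LE d r (return LE_space L)"
  unfolding unimodular_LE_def nn_integral_return_LE_space
  using mass_transport_left_invariant assms by blast

theorem lemma5p1:
  fixes d :: nat and r :: "nat list"
  assumes "d \<ge> 2" and "r \<in> tree_verts d"
  shows "\<exists>M. prob_space M \<and> sets M = sets LE_space \<and>
           (AE L in M. line_ensemble d L) \<and>
           unimodular_LE d r M \<and>
           measure M {L \<in> space M. in_line_ensemble r L} = 1"
proof (intro exI conjI)
  let ?L = "label_edges d {0, 1}"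
  let ?M = "return LE_space ?L"
  show "prob_space ?M" by (rule prob_space_return) (simp add: space_LE_space)
  show "sets ?M = sets LE_space" by simp
  show "AE L in ?M. line_ensemble d L"
    using AE_return_LE_space[of ?L] line_ensemble_label_edges_01[OF assms(1)] by (auto elim: AE_mp)
  show "unimodular_LE d r ?M"
    using unimodular_LE_return ensemble_aut_gen_mult_label_edges assms(2) by blast
  have "{L \<in> space LE_space. in_line_ensemble r L} \<in> sets LE_space"
    using pred_LE_space_in_line_ensemble by measurable
  from measure_return[OF this, of ?L]
  show "measure ?M {L \<in> space ?M. in_line_ensemble r L} = 1"
    using in_line_ensemble_label_edges_01[OF assms] by (simp add: space_LE_space)
qed

end
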